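(* Let $(X,\tau)$ be a Tychonoff, extremally disconnected space. Then for every ideal $\mathcal{P}$ of closed subsets of $X$, the space $(X,\tau,\mathcal{P})$ is $\tau\mathcal{P}$-zero-dimensional.
   Context: An ideal $\mathcal{P}$ of closed subsets of $X$ is a nonempty family of closed sets closed under finite unions and under taking closed subsets. For $f\colon X\to\mathbb{R}$, $D_f$ denotes the set of points of discontinuity of $f$, and $C(X)_\mathcal{P}=\{f\colon X\to\mathbb{R} : \overline{D_f}\in\mathcal{P}\}$. For $f\in C(X)_\mathcal{P}$, $Z_\mathcal{P}(f)=\{x: f(x)=0\}$. A set $U\subseteq X$ is $\tau\mathcal{P}$-clopen if $U=Z_\mathcal{P}(f)=X\setminus Z_\mathcal{P}(g)$ for some $f,g\in C(X)_\mathcal{P}$. Sets $A,B\subseteq X$ are $\mathcal{P}$-completely separated if there is $f\in C(X)_\mathcal{P}$ with $f(A)\subseteq\{0\}$ and $f(B)\subseteq\{1\}$. $(X,\tau,\mathcal{P})$ is $\tau\mathcal{P}$-zero-dimensional if for every pair of $\mathcal{P}$-completely separated sets $A,B\subseteq X$ there is a $\tau\mathcal{P}$-clopen $U$ with $A\subseteq U\subseteq X\setminus B$. *)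

theory Defs
  imports "HOL-Analysis.Analysis"
begin

definition Tychonoff_space :: "'a topology \<Rightarrow> bool" where
  "Tychonoff_space X \<longleftrightarrow> completely_regular_space X \<and> t1_space X"

definition extremally_disconnected :: "'a topology \<Rightarrow> bool" where
  "extremally_disconnected X \<longleftrightarrow> (\<forall>U. openin X U \<longrightarrow> openin X (X closure_of U))"

definition closed_ideal :: "'a topology \<Rightarrow> 'a set set \<Rightarrow> bool" where
  "closed_ideal X P \<longleftrightarrow> P \<noteq> {} \<and> (\<forall>A\<in>P. closedin X A)
     \<and> (\<forall>A\<in>P. \<forall>B\<in>P. A \<union> B \<in> P)
     \<and> (\<forall>A\<in>P. \<forall>B. closedin X B \<and> B \<subseteq> A \<longrightarrow> B \<in> P)"

definition continuous_at_pt :: "'a topology \<Rightarrow> ('a \<Rightarrow> real) \<Rightarrow> 'a \<Rightarrow> bool" where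
  "continuous_at_pt X f x \<longleftrightarrow>
     (\<forall>V. open V \<and> f x \<in> V \<longrightarrow> (\<exists>U. openin X U \<and> x \<in> U \<and> f ` U \<subseteq> V))"

definition discont_set :: "'a topology \<Rightarrow> ('a \<Rightarrow> real) \<Rightarrow> 'a set" where
  "discont_set X f = {x \<in> topspace X. \<not> continuous_at_pt X f x}"

text \<open>C(X)_P (functions are only considered on topspace X).\<close>
definition CP :: "'a topology \<Rightarrow> 'a set set \<Rightarrow> ('a \<Rightarrow> real) set" where
  "CP X P = {f. X closure_of (discont_set X f) \<in> P}"

definition ZP :: "'a topology \<Rightarrow> ('a \<Rightarrow> real) \<Rightarrow> 'a set" where
  "ZP X f = {x \<in> topspace X. f x = 0}"

definition tauP_clopen :: "'a topology \<Rightarrow> 'a set set \<Rightarrow> 'a set \<Rightarrow> bool" where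
  "tauP_clopen X P U \<longleftrightarrow>
     (\<exists>f\<in>CP X P. \<exists>g\<in>CP X P. U = ZP X f \<and> U = topspace X - ZP X g)"

definition P_completely_separated :: "'a topology \<Rightarrow> 'a set set \<Rightarrow> 'a set \<Rightarrow> 'a set \<Rightarrow> bool" where
  "P_completely_separated X P A B \<longleftrightarrow>
     (\<exists>f\<in>CP X P. f ` A \<subseteq> {0} \<and> f ` B \<subseteq> {1})"

definition tauP_zero_dimensional :: "'a topology \<Rightarrow> 'a set set \<Rightarrow> bool" where
  "tauP_zero_dimensional X P \<longleftrightarrow>
     (\<forall>A B. A \<subseteq> topspace X \<and> B \<subseteq> topspace X \<and> P_completely_separated X P A B
        \<longrightarrow> (\<exists>U. tauP_clopen X P U \<and> A \<subseteq> U \<and> U \<subseteq> topspace X - B))"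

end

theory Submission
  imports Defs
begin

text \<open>Let \<open>f\<close> separate \<open>A\<close> from \<open>B\<close> and let \<open>D \<in> P\<close> be the closure of its
  discontinuity set. Off \<open>D\<close> the sets \<open>f < 1/2\<close> and \<open>f > 1/2\<close> are disjoint and open;
  by extremal disconnectedness the closure \<open>C\<close> of the first is clopen and misses the
  second. The set \<open>U = (C - D) \<union> (D \<inter> f\<^sup>-\<^sup>1{0})\<close> then contains \<open>A\<close>, misses \<open>B\<close> and
  has its frontier inside \<open>D\<close>, so the indicator functions of \<open>U\<close> lie in \<open>C(X)\<^sub>P\<close>.\<close>

lemma continuous_at_pt_locally_constant:
  assumes "openin X W" "x \<in> W" "\<And>y. y \<in> W \<Longrightarrow> h y = h x"
  shows "continuous_at_pt X h x"
  unfolding continuous_at_pt_def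
proof (intro allI impI)
  fix V :: "real set" assume "open V \<and> h x \<in> V"
  then have "h ` W \<subseteq> V" using assms(3) by auto
  then show "\<exists>U. openin X U \<and> x \<in> U \<and> h ` U \<subseteq> V" using assms(1,2) by blast
qed

lemma discont_set_indicator_subset_frontier_of:
  "discont_set X (\<lambda>y. if y \<in> U then a else b) \<subseteq> X frontier_of U"
proof
  fix x assume x: "x \<in> discont_set X (\<lambda>y. if y \<in> U then a else b)"
  then have top: "x \<in> topspace X" by (simp add: discont_set_def)
  show "x \<in> X frontier_of U"
  proof (rule ccontr)
    assume "x \<notin> X frontier_of U"
    then consider "x \<in> X interior_of U" | "x \<in> topspace X - X closure_of U"
      using top by (auto simp: frontier_of_def)
    then have "continuous_at_pt X (\<lambda>y. if y \<in> U then a else b) x"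
    proof cases
      case 1
      then show ?thesis
        by (intro continuous_at_pt_locally_constant[of X "X interior_of U"])
           (auto dest: interior_of_subset[THEN subsetD])
    next
      case 2
      moreover have "topspace X \<inter> U \<subseteq> X closure_of U"
        by (simp add: closure_of_subset_Int)
      ultimately show ?thesis
        by (intro continuous_at_pt_locally_constant[of X "topspace X - X closure_of U"]) auto
    qed
    then show False using x by (simp add: discont_set_def)
  qed
qed

lemma CP_if_discont_set_subset:
  assumes "closed_ideal X P" "D \<in> P" "discont_set X h \<subseteq> D"
  shows "h \<in> CP X P"
proof -
  have ideal: "closedin X D" "\<And>B. closedin X B \<Longrightarrow> B \<subseteq> D \<Longrightarrow> B \<in> P"
    using assms(1,2) unfolding closed_ideal_def by blast+
  then have "X closure_of discont_set X h \<subseteq> D"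
    using assms(3) by (simp add: closure_of_minimal)
  then show ?thesis
    unfolding CP_def by (simp add: ideal(2))
qed

lemma tauP_clopen_if_frontier_of_in:
  assumes "closed_ideal X P" "X frontier_of U \<in> P" "U \<subseteq> topspace X"
  shows "tauP_clopen X P U"
proof -
  define f where "f = (\<lambda>y. if y \<in> U then 0 else (1::real))"
  define g where "g = (\<lambda>y. if y \<in> U then 1 else (0::real))"
  have "f \<in> CP X P" "g \<in> CP X P"
    unfolding f_def g_def
    by (rule CP_if_discont_set_subset[OF assms(1,2) discont_set_indicator_subset_frontier_of])+
  moreover have "U = ZP X f" "U = topspace X - ZP X g"
    using assms(3) by (auto simp: ZP_def f_def g_def)
  ultimately show ?thesis unfolding tauP_clopen_def by blast
qed

lemma openin_vimage_off_discont_set: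
  assumes "closedin X D" "discont_set X f \<subseteq> D" "open V"
  shows "openin X {x \<in> topspace X - D. f x \<in> V}"
proof (subst openin_subopen, intro ballI)
  fix x assume x: "x \<in> {x \<in> topspace X - D. f x \<in> V}"
  then have "continuous_at_pt X f x"
    using assms(2) by (auto simp: discont_set_def)
  then obtain W where W: "openin X W" "x \<in> W" "f ` W \<subseteq> V"
    using x assms(3) unfolding continuous_at_pt_def by blast
  then have "openin X (W \<inter> (topspace X - D))" "W \<inter> (topspace X - D) \<subseteq> {x \<in> topspace X - D. f x \<in> V}"
    using assms(1) by auto
  then show "\<exists>T. openin X T \<and> x \<in> T \<and> T \<subseteq> {x \<in> topspace X - D. f x \<in> V}"
    using W(2) x by blast
qed

lemma extremally_disconnected_separating_set:
  assumes ed: "extremally_disconnected X"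
    and D: "closedin X D" "discont_set X f \<subseteq> D"
    and A: "A \<subseteq> topspace X" "f ` A \<subseteq> {0}"
    and B: "B \<subseteq> topspace X" "f ` B \<subseteq> {1}"
  obtains U where "U \<subseteq> topspace X" "A \<subseteq> U" "U \<inter> B = {}" "X frontier_of U \<subseteq> D"
proof -
  define G where "G = {x \<in> topspace X - D. f x \<in> {..<1/2}}"
  define H where "H = {x \<in> topspace X - D. f x \<in> {1/2<..}}"
  define C where "C = X closure_of G"
  define U where "U = (C - D) \<union> {x \<in> D. f x = 0}"
  have G: "openin X G" and H: "openin X H"
    unfolding G_def H_def by (intro openin_vimage_off_discont_set[OF D] open_lessThan open_greaterThan)+
  have C: "openin X C" "closedin X C"
    using ed G by (simp_all add: extremally_disconnected_def C_def)
  have "H \<inter> G = {}" by (auto simp: G_def H_def)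
  then have "H \<inter> C = {}"
    unfolding C_def using H by (simp add: openin_Int_closure_of_eq_empty)
  have "G \<subseteq> C"
    unfolding C_def using G by (simp add: closure_of_subset openin_subset)
  have "U \<subseteq> topspace X"
    unfolding U_def using D(1) C(2) closedin_subset by blast
  moreover have "x \<in> U" if "x \<in> A" for x
  proof -
    have "f x = 0" "x \<in> topspace X" using A that by auto
    then show ?thesis using \<open>G \<subseteq> C\<close> by (auto simp: U_def G_def)
  qed
  moreover have "x \<notin> U" if "x \<in> B" for x
  proof -
    have "f x = 1" "x \<in> topspace X" using B that by auto
    then show ?thesis using \<open>H \<inter> C = {}\<close> by (auto simp: U_def H_def)
  qed
  moreover have "X frontier_of U \<subseteq> D"
  proof
    fix x assume x: "x \<in> X frontier_of U"
    show "x \<in> D"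
    proof (rule ccontr)
      assume "x \<notin> D"
      moreover have "x \<in> topspace X"
        using x by (rule frontier_of_subset_topspace[THEN subsetD])
      ultimately consider "x \<in> C - D" | "x \<in> topspace X - C - D" by blast
      then show False
      proof cases
        case 1
        have "openin X (C - D)" using C(1) D(1) by blast
        moreover have "C - D \<subseteq> U" by (auto simp: U_def)
        ultimately have "C - D \<subseteq> X interior_of U" by (rule interior_of_maximal[rotated])
        then show False using 1 x by (auto simp: frontier_of_def)
      next
        case 2
        have "openin X (topspace X - C - D)" using C(2) D(1) by blast
        moreover have "(topspace X - C - D) \<inter> U = {}" by (auto simp: U_def)
        ultimately have "(topspace X - C - D) \<inter> X closure_of U = {}"
          by (simp add: openin_Int_closure_of_eq_empty)
        then show False using 2 x by (auto simp: frontier_of_def)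
      qed
    qed
  qed
  ultimately show ?thesis using that by blast
qed

theorem theorem3p3:
  fixes X :: "'a topology"
  assumes "Tychonoff_space X" and "extremally_disconnected X"
  shows "\<forall>P. closed_ideal X P \<longrightarrow> tauP_zero_dimensional X P"
proof (intro allI impI)
  fix P assume P: "closed_ideal X P"
  show "tauP_zero_dimensional X P"
    unfolding tauP_zero_dimensional_def
  proof (intro allI impI)
    fix A B assume AB: "A \<subseteq> topspace X \<and> B \<subseteq> topspace X \<and> P_completely_separated X P A B"
    then obtain f where f: "f \<in> CP X P" "f ` A \<subseteq> {0}" "f ` B \<subseteq> {1}"
      unfolding P_completely_separated_def by blast
    define D where "D = X closure_of discont_set X f"
    have "closedin X D" unfolding D_def by simp
    moreover have "discont_set X f \<subseteq> D"
      unfolding D_def by (rule closure_of_subset) (auto simp: discont_set_def)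
    moreover have "A \<subseteq> topspace X" "B \<subseteq> topspace X" using AB by simp_all
    ultimately obtain U where U: "U \<subseteq> topspace X" "A \<subseteq> U" "U \<inter> B = {}" "X frontier_of U \<subseteq> D"
      by (rule extremally_disconnected_separating_set[OF assms(2) _ _ _ f(2) _ f(3)])
    have "closedin X B' \<Longrightarrow> B' \<subseteq> D \<Longrightarrow> B' \<in> P" for B'
      using P f(1) unfolding closed_ideal_def CP_def D_def by blast
    then have "X frontier_of U \<in> P" using closedin_frontier_of U(4) by blast
    with P U(1) have "tauP_clopen X P U" by (intro tauP_clopen_if_frontier_of_in)
    then show "\<exists>U. tauP_clopen X P U \<and> A \<subseteq> U \<and> U \<subseteq> topspace X - B" using U by blast
  qed
qed

end
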